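(* Let $\mathcal{G}$ be a graph on $N$ vertices with adjacency matrix $\mathbf{A}$, used as the shift operator, and let $\underline{x}$ be a random process over the vertices of $\mathcal{G}$ with covariance matrix $\mathbf{C}$. Then $\underline{x}$ is superstationary if and only if $\mathbf{A}$ and $\mathbf{C}$ supercommute.
   Context: A random process $\underline{x}$ (a random vector indexed by the vertices) with covariance matrix $\mathbf{C}$, defined over a graph with shift operator $\mathbf{S}$ (here the adjacency matrix), is called graph wide-sense stationary (GWSS) if $\mathbf{C}$ and $\mathbf{S}$ are jointly diagonalizable, i.e. have a common set of eigenvectors. For a subset $V'$ of the vertices, the subgraph on $V'$ has as adjacency matrix the principal submatrix of $\mathbf{A}$ with rows and columns indexed by $V'$, and the subprocess over it is the restriction of $\underline{x}$ to $V'$, whose covariance matrix is the corresponding principal submatrix of $\mathbf{C}$. The process $\underline{x}$ is superstationary if (i) $\underline{x}$ is GWSS over $\mathcal{G}$, and (ii) for every such subgraph, the subprocess over it is GWSS with respect to the subgraph's adjacency matrix. Two square matrices $\mathbf{B}_1,\mathbf{B}_2$ of the same size supercommute if $\mathbf{B}_1\mathbf{B}_2=\mathbf{B}_2\mathbf{B}_1$ and, for every set of indices, the principal submatrix of $\mathbf{B}_1$ on those indices commutes with the corresponding principal submatrix of $\mathbf{B}_2$. *)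

theory Defs
  imports "Jordan_Normal_Form.Char_Poly" "Jordan_Normal_Form.DL_Submatrix"
begin

definition adjacency_matrix :: "nat \<Rightarrow> real mat \<Rightarrow> bool" where
  "adjacency_matrix N A \<longleftrightarrow> A \<in> carrier_mat N N \<and> A\<^sup>T = A \<and>
     (\<forall>i<N. \<forall>j<N. A $$ (i,j) = 0 \<or> A $$ (i,j) = 1) \<and> (\<forall>i<N. A $$ (i,i) = 0)"

definition covariance_matrix :: "nat \<Rightarrow> real mat \<Rightarrow> bool" where
  "covariance_matrix N C \<longleftrightarrow> C \<in> carrier_mat N N \<and> C\<^sup>T = C \<and>
     (\<forall>v \<in> carrier_vec N. v \<bullet> (C *\<^sub>v v) \<ge> 0)"

definition jointly_diagonalizable :: "real mat \<Rightarrow> real mat \<Rightarrow> bool" where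
  "jointly_diagonalizable B1 B2 \<longleftrightarrow>
     (\<exists>n. B1 \<in> carrier_mat n n \<and> B2 \<in> carrier_mat n n \<and>
        (\<exists>P. P \<in> carrier_mat n n \<and> invertible_mat P \<and>
           (\<forall>j<n. (\<exists>k. eigenvector B1 (col P j) k) \<and> (\<exists>k. eigenvector B2 (col P j) k))))"

definition GWSS :: "real mat \<Rightarrow> real mat \<Rightarrow> bool" where
  "GWSS S C \<longleftrightarrow> jointly_diagonalizable C S"

definition superstationary :: "nat \<Rightarrow> real mat \<Rightarrow> real mat \<Rightarrow> bool" where
  "superstationary N A C \<longleftrightarrow> GWSS A C \<and>
     (\<forall>V' \<subseteq> {0..<N}. GWSS (submatrix A V' V') (submatrix C V' V'))"

definition supercommute :: "nat \<Rightarrow> real mat \<Rightarrow> real mat \<Rightarrow> bool" where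
  "supercommute N B1 B2 \<longleftrightarrow> B1 * B2 = B2 * B1 \<and>
     (\<forall>I \<subseteq> {0..<N}. submatrix B1 I I * submatrix B2 I I = submatrix B2 I I * submatrix B1 I I)"

end

theory Submission
  imports Defs "Jordan_Normal_Form.Schur_Decomposition" "Jordan_Normal_Form.Spectral_Radius"
begin

text \<open>Both \<open>A\<close> and \<open>C\<close> are real symmetric, and so are all their principal submatrices, so
  the theorem reduces to: two real symmetric matrices are jointly diagonalizable iff they commute.
  Jointly diagonalizable matrices are simultaneously similar to diagonal matrices, which commute.
  Conversely, commuting symmetric matrices have a common eigenvector: take an eigenvector of \<open>C\<close>
  in an orthonormal eigenbasis of \<open>A\<close> (spectral theorem) and keep only its coordinates in one
  eigenspace of \<open>A\<close>. Completing it to an orthonormal basis splits off a \<open>1 \<times> 1\<close> block from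
  both matrices, leaving commuting symmetric blocks of smaller size, and induction yields a common
  orthonormal eigenbasis.\<close>

definition orthonormal_mat :: "nat \<Rightarrow> real mat \<Rightarrow> bool" where
  "orthonormal_mat n P \<longleftrightarrow> P \<in> carrier_mat n n \<and> P\<^sup>T * P = 1\<^sub>m n"

lemma orthonormal_mat_right_inverse:
  assumes "orthonormal_mat n P"
  shows "P * P\<^sup>T = 1\<^sub>m n"
  using assms mat_mult_left_right_inverse[of "P\<^sup>T" n P] unfolding orthonormal_mat_def by auto

lemma orthonormal_mat_mult:
  assumes P: "orthonormal_mat n P" and Q: "orthonormal_mat n Q"
  shows "orthonormal_mat n (P * Q)"
proof -
  have P': "P \<in> carrier_mat n n" "P\<^sup>T * P = 1\<^sub>m n" and Q': "Q \<in> carrier_mat n n" "Q\<^sup>T * Q = 1\<^sub>m n"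
    using P Q unfolding orthonormal_mat_def by auto
  have "(P * Q)\<^sup>T * (P * Q) = Q\<^sup>T * (P\<^sup>T * (P * Q))"
    using P' Q' by (simp add: transpose_mult assoc_mult_mat[of _ n n _ n _ n])
  also have "P\<^sup>T * (P * Q) = Q" using P' Q' by (simp flip: assoc_mult_mat[of _ n n _ n _ n])
  finally show ?thesis using P' Q' unfolding orthonormal_mat_def by simp
qed

lemma orthonormal_mat_invertible:
  assumes "orthonormal_mat n P"
  shows "invertible_mat P"
  using assms orthonormal_mat_right_inverse[OF assms]
  unfolding orthonormal_mat_def invertible_mat_def inverts_mat_def by auto

lemma orthonormal_mat_conj:
  assumes P: "orthonormal_mat n P" and M: "M \<in> carrier_mat n n"
  shows "M * P = P * (P\<^sup>T * M * P)"
proof -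
  have Pc: "P \<in> carrier_mat n n" using P unfolding orthonormal_mat_def by simp
  have "P * (P\<^sup>T * M * P) = (P * P\<^sup>T) * M * P"
    using Pc M by (simp add: assoc_mult_mat[of _ n n _ n _ n])
  thus ?thesis using orthonormal_mat_right_inverse[OF P] Pc M by simp
qed

lemma orthonormal_congruence_mult:
  assumes P: "orthonormal_mat n P" and A: "A \<in> carrier_mat n n" and C: "C \<in> carrier_mat n n"
  shows "(P\<^sup>T * A * P) * (P\<^sup>T * C * P) = P\<^sup>T * (A * C) * P"
proof -
  have Pc: "P \<in> carrier_mat n n" using P unfolding orthonormal_mat_def by simp
  have "(P\<^sup>T * A * P) * (P\<^sup>T * C * P) = P\<^sup>T * A * (P * P\<^sup>T) * C * P"
    using Pc A C by (simp add: assoc_mult_mat[of _ n n _ n _ n])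
  thus ?thesis unfolding orthonormal_mat_right_inverse[OF P]
    using Pc A C by (simp add: assoc_mult_mat[of _ n n _ n _ n])
qed

lemma orthonormal_congruence_eigenvector:
  assumes P: "orthonormal_mat n P" and M: "M \<in> carrier_mat n n" and u: "u \<in> carrier_vec n"
    and Mu: "(P\<^sup>T * M * P) *\<^sub>v u = \<mu> \<cdot>\<^sub>v u"
  shows "M *\<^sub>v (P *\<^sub>v u) = \<mu> \<cdot>\<^sub>v (P *\<^sub>v u)"
proof -
  have Pc: "P \<in> carrier_mat n n" using P unfolding orthonormal_mat_def by simp
  have "M *\<^sub>v (P *\<^sub>v u) = (M * P) *\<^sub>v u" using M Pc u by simp
  also have "\<dots> = P *\<^sub>v ((P\<^sup>T * M * P) *\<^sub>v u)"
    unfolding orthonormal_mat_conj[OF P M] using M Pc u by (subst assoc_mult_mat_vec) auto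
  finally show ?thesis unfolding Mu using Pc u by (simp add: mult_mat_vec)
qed

lemma congruence_symmetric:
  fixes W A :: "'a :: comm_semiring_0 mat"
  assumes Wc: "W \<in> carrier_mat n n" and A: "A \<in> carrier_mat n n" and sym: "A\<^sup>T = A"
  shows "(W\<^sup>T * A * W)\<^sup>T = W\<^sup>T * A * W"
proof -
  have "(W\<^sup>T * A * W)\<^sup>T = W\<^sup>T * (W\<^sup>T * A)\<^sup>T"
    using Wc A by (intro transpose_mult) auto
  also have "(W\<^sup>T * A)\<^sup>T = A * W" using Wc A sym by (simp add: transpose_mult[of "W\<^sup>T" n n A n])
  finally show ?thesis using Wc A by (simp add: assoc_mult_mat[of _ n n _ n _ n])
qed

lemma congruence_mult:
  fixes W Q M :: "'a :: comm_semiring_0 mat"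
  assumes "W \<in> carrier_mat n n" "Q \<in> carrier_mat n n" "M \<in> carrier_mat n n"
  shows "(W * Q)\<^sup>T * M * (W * Q) = Q\<^sup>T * (W\<^sup>T * M * W) * Q"
  using assms by (simp add: transpose_mult[OF assms(1,2)] assoc_mult_mat[of _ n n _ n _ n])

lemma diagonal_mat_mult_index_left:
  fixes G M :: "'a :: semiring_0 mat"
  assumes "G \<in> carrier_mat k k" "diagonal_mat G" "M \<in> carrier_mat k nc" "i < k" "j < nc"
  shows "(G * M) $$ (i,j) = G $$ (i,i) * M $$ (i,j)"
proof -
  have "(G * M) $$ (i,j) = (\<Sum>l = 0..<k. G $$ (i,l) * M $$ (l,j))"
    using assms by (simp add: scalar_prod_def)
  also have "\<dots> = (\<Sum>l = 0..<k. if l = i then G $$ (i,i) * M $$ (i,j) else 0)"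
    using assms by (intro sum.cong) (auto simp: diagonal_mat_def)
  finally show ?thesis using assms by simp
qed

lemma diagonal_mat_mult_index_right:
  fixes G M :: "'a :: semiring_0 mat"
  assumes "G \<in> carrier_mat k k" "diagonal_mat G" "M \<in> carrier_mat nr k" "i < nr" "j < k"
  shows "(M * G) $$ (i,j) = M $$ (i,j) * G $$ (j,j)"
proof -
  have "(M * G) $$ (i,j) = (\<Sum>l = 0..<k. M $$ (i,l) * G $$ (l,j))"
    using assms by (simp add: scalar_prod_def)
  also have "\<dots> = (\<Sum>l = 0..<k. if l = j then M $$ (i,j) * G $$ (j,j) else 0)"
    using assms by (intro sum.cong) (auto simp: diagonal_mat_def)
  finally show ?thesis using assms by simp
qed

lemma mult_diagonal_mat_col:
  fixes G M :: "'a :: comm_semiring_0 mat"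
  assumes "G \<in> carrier_mat k k" "diagonal_mat G" "M \<in> carrier_mat nr k" "j < k"
  shows "col (M * G) j = G $$ (j,j) \<cdot>\<^sub>v col M j"
proof (rule eq_vecI)
  fix i assume "i < dim_vec (G $$ (j,j) \<cdot>\<^sub>v col M j)"
  hence "i < nr" using assms by simp
  thus "col (M * G) j $ i = (G $$ (j,j) \<cdot>\<^sub>v col M j) $ i"
    using diagonal_mat_mult_index_right[OF assms(1-3) _ assms(4), of i] assms by (simp add: mult.commute)
qed (use assms in simp)

lemma diagonal_mat_mult_comm:
  fixes D E :: "'a :: comm_semiring_0 mat"
  assumes D: "D \<in> carrier_mat n n" "diagonal_mat D" and E: "E \<in> carrier_mat n n" "diagonal_mat E"
  shows "D * E = E * D"
proof (rule eq_matI)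
  fix i j assume "i < dim_row (E * D)" "j < dim_col (E * D)"
  hence ij: "i < n" "j < n" using D E by auto
  show "(D * E) $$ (i,j) = (E * D) $$ (i,j)"
    using diagonal_mat_mult_index_left[OF D E(1) ij] diagonal_mat_mult_index_left[OF E D(1) ij]
      D E ij by (cases "i = j") (auto simp: diagonal_mat_def mult.commute)
qed (use D E in simp_all)

lemma diagonal_mat_four_block_scalar:
  fixes D :: "'a :: zero mat"
  assumes "D \<in> carrier_mat m m" "diagonal_mat D"
  shows "diagonal_mat (four_block_mat (mat 1 1 (\<lambda>_. a)) (0\<^sub>m 1 m) (0\<^sub>m m 1) D)"
  using assms unfolding diagonal_mat_def by auto

text \<open>A complex eigenvalue \<open>l\<close> of a real symmetric matrix with eigenvector \<open>v\<close> is real, since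
  \<open>l * (v\<^sup>* v) = v\<^sup>* A v\<close> is fixed by conjugation; its real part is then a root of the
  real characteristic polynomial.\<close>

lemma symmetric_real_mat_has_eigenvector:
  fixes A :: "real mat"
  assumes A: "A \<in> carrier_mat n n" and sym: "A\<^sup>T = A" and n: "n > 0"
  shows "\<exists>v a. eigenvector A v a"
proof -
  let ?Ac = "map_mat complex_of_real A"
  have Ac: "?Ac \<in> carrier_mat n n" using A by auto
  from spectrum_non_empty[OF Ac n] obtain l v where ev: "eigenvector ?Ac v l"
    by (auto simp: spectrum_def eigenvalue_def)
  hence v: "v \<in> carrier_vec n" "v \<noteq> 0\<^sub>v n" "?Ac *\<^sub>v v = l \<cdot>\<^sub>v v"
    unfolding eigenvector_def using Ac by auto
  have A_sym: "A $$ (i,j) = A $$ (j,i)" if "i < n" "j < n" for i j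
    using arg_cong[OF sym, of "\<lambda>M. M $$ (i,j)"] that A by auto
  have row: "(\<Sum>j = 0..<n. complex_of_real (A$$(i,j)) * v$j) = l * v$i" if i: "i < n" for i
  proof -
    have "(?Ac *\<^sub>v v) $ i = (l \<cdot>\<^sub>v v) $ i" using v(3) by simp
    thus ?thesis using i A v(1) by (simp add: scalar_prod_def)
  qed
  define s where "s = (\<Sum>i = 0..<n. cnj (v$i) * (\<Sum>j = 0..<n. complex_of_real (A$$(i,j)) * v$j))"
  define t where "t = (\<Sum>i = 0..<n. cnj (v$i) * v$i)"
  have "s = (\<Sum>i = 0..<n. cnj (v$i) * (l * v$i))" unfolding s_def
    by (rule sum.cong) (simp_all add: row)
  hence st: "s = l * t" unfolding t_def sum_distrib_left by (simp add: ac_simps)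
  have "cnj s = (\<Sum>i = 0..<n. \<Sum>j = 0..<n. v$i * complex_of_real (A$$(i,j)) * cnj (v$j))"
    unfolding s_def by (simp add: sum_distrib_left mult.assoc)
  also have "\<dots> = (\<Sum>j = 0..<n. \<Sum>i = 0..<n. v$i * complex_of_real (A$$(i,j)) * cnj (v$j))"
    by (rule sum.swap)
  also have "\<dots> = s" unfolding s_def sum_distrib_left
    by (intro sum.cong refl) (auto simp: A_sym mult.commute mult.left_commute)
  finally have s_real: "cnj s = s" .
  have t_real: "cnj t = t" unfolding t_def by (simp add: mult.commute)
  obtain i where i: "i < n" "v $ i \<noteq> 0" using v(1,2) by force
  have "Re t = (\<Sum>i = 0..<n. (Re (v$i))\<^sup>2 + (Im (v$i))\<^sup>2)" unfolding t_def
    by (simp add: power2_eq_square)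
  moreover have "(\<Sum>i = 0..<n. (Re (v$i))\<^sup>2 + (Im (v$i))\<^sup>2) > 0"
    using i by (intro sum_pos2[of _ i]) (auto simp: complex_eq_iff sum_power2_gt_zero_iff)
  ultimately have "t \<noteq> 0" by auto
  hence "cnj l = l" using st s_real t_real by (metis complex_cnj_divide nonzero_mult_div_cancel_right)
  hence l: "l = complex_of_real (Re l)" by (metis Reals_cnj_iff complex_is_Real_iff of_real_Re)
  have "poly (char_poly ?Ac) (complex_of_real (Re l)) = 0"
    using ev l eigenvalue_root_char_poly[OF Ac] unfolding eigenvalue_def by metis
  hence "poly (char_poly A) (Re l) = 0"
    unfolding of_real_hom.char_poly_hom[OF A] of_real_hom.poly_map_poly by simp
  thus ?thesis using eigenvalue_root_char_poly[OF A] unfolding eigenvalue_def by blast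
qed

lemma orthonormal_completion:
  fixes v :: "real vec"
  assumes v: "v \<in> carrier_vec n" and v0: "v \<noteq> 0\<^sub>v n"
  shows "\<exists>W k. orthonormal_mat n W \<and> col W 0 = k \<cdot>\<^sub>v v"
proof -
  have n: "n \<noteq> 0" using v v0 by auto
  interpret cof_vec_space n "TYPE(real)" .
  define b where "b = basis_completion v"
  define ws where "ws = gram_schmidt n b"
  from basis_completion[OF v v0, folded b_def]
  have dist_b: "distinct b" and indep: "\<not> lin_dep (set b)" and b: "set b \<subseteq> carrier_vec n"
    and hdb: "hd b = v" and len_b: "length b = n" by auto
  from hdb len_b n obtain vs where bv: "b = v # vs" by (cases b) auto
  from gram_schmidt_result[OF b dist_b indep refl, folded ws_def]
  have ws: "set ws \<subseteq> carrier_vec n" "corthogonal ws" "length ws = n" by (auto simp: len_b)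
  from gram_schmidt_hd[OF v, of vs, folded bv] have hdws: "hd ws = v" unfolding ws_def .
  define normalize where "normalize = (\<lambda>w :: real vec. (1 / sqrt (w \<bullet> w)) \<cdot>\<^sub>v w)"
  define W where "W = mat_of_cols n (map normalize ws)"
  have wsi: "ws ! i \<in> carrier_vec n" if "i < n" for i using ws that by auto
  have W: "W \<in> carrier_mat n n" unfolding W_def using ws(3) by (simp add: mat_of_cols_def)
  have colW: "col W i = normalize (ws ! i)" if "i < n" for i
    unfolding W_def using that ws by (subst col_mat_of_cols) (auto simp: normalize_def)
  have orth: "ws ! i \<bullet> ws ! j = 0 \<longleftrightarrow> i \<noteq> j" if "i < n" "j < n" for i j
    using corthogonalD[OF ws(2), of i j] that ws(3) by simp
  have pos: "ws ! i \<bullet> ws ! i > 0" if "i < n" for i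
    using orth[OF that that] conjugate_square_ge_0_vec[of "ws ! i"] by simp
  have "W\<^sup>T * W = 1\<^sub>m n"
  proof (rule eq_matI)
    fix i j assume "i < dim_row (1\<^sub>m n)" "j < dim_col (1\<^sub>m n)"
    hence i: "i < n" and j: "j < n" by auto
    have "(W\<^sup>T * W) $$ (i,j) = col W i \<bullet> col W j" using W i j by simp
    also have "\<dots> = (1 / sqrt (ws ! i \<bullet> ws ! i)) * (1 / sqrt (ws ! j \<bullet> ws ! j)) * (ws ! i \<bullet> ws ! j)"
      unfolding colW[OF i] colW[OF j] normalize_def using wsi[OF i] wsi[OF j]
      by (simp add: smult_scalar_prod_distrib[of _ n])
    also have "\<dots> = 1\<^sub>m n $$ (i,j)"
      using orth[OF i j] i j pos[OF j] by (cases "i = j") (simp_all add: field_simps)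
    finally show "(W\<^sup>T * W) $$ (i,j) = 1\<^sub>m n $$ (i,j)" .
  qed (use W in auto)
  moreover have "col W 0 = normalize v" using colW[of 0] n hdws ws(3) by (cases ws) auto
  ultimately show ?thesis using W unfolding orthonormal_mat_def normalize_def by blast
qed

lemma orthonormal_deflation:
  assumes W: "orthonormal_mat (Suc m) W" and A: "A \<in> carrier_mat (Suc m) (Suc m)"
    and sym: "A\<^sup>T = A" and ev: "A *\<^sub>v col W 0 = a \<cdot>\<^sub>v col W 0"
  shows "\<exists>A'. A' \<in> carrier_mat m m \<and> A'\<^sup>T = A' \<and>
           W\<^sup>T * A * W = four_block_mat (mat 1 1 (\<lambda>_. a)) (0\<^sub>m 1 m) (0\<^sub>m m 1) A'"
proof -
  define B where "B = W\<^sup>T * A * W"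
  define A' where "A' = mat m m (\<lambda>(i,j). B $$ (Suc i, Suc j))"
  have Wc: "W \<in> carrier_mat (Suc m) (Suc m)" and WtW: "W\<^sup>T * W = 1\<^sub>m (Suc m)"
    using W unfolding orthonormal_mat_def by auto
  have B: "B \<in> carrier_mat (Suc m) (Suc m)" unfolding B_def using Wc A by auto
  have B_sym: "B $$ (i,j) = B $$ (j,i)" if "i < Suc m" "j < Suc m" for i j
    using arg_cong[OF congruence_symmetric[OF Wc A sym], of "\<lambda>M. M $$ (j,i)"] that B
    unfolding B_def by auto
  have B_col0: "B $$ (i,0) = (if i = 0 then a else 0)" if i: "i < Suc m" for i
  proof -
    have "B $$ (i,0) = col W i \<bullet> (A *\<^sub>v col W 0)"
      unfolding B_def using i Wc A by (simp add: assoc_mult_mat[of _ "Suc m" "Suc m" _ "Suc m" _ "Suc m"] mult_mat_vec_def)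
    also have "\<dots> = a * (W\<^sup>T * W) $$ (i,0)" unfolding ev using Wc i by simp
    finally show ?thesis unfolding WtW using i by simp
  qed
  have "B = four_block_mat (mat 1 1 (\<lambda>_. a)) (0\<^sub>m 1 m) (0\<^sub>m m 1) A'"
  proof (rule eq_matI)
    fix i j assume "i < dim_row (four_block_mat (mat 1 1 (\<lambda>_. a)) (0\<^sub>m 1 m) (0\<^sub>m m 1) A')"
      "j < dim_col (four_block_mat (mat 1 1 (\<lambda>_. a)) (0\<^sub>m 1 m) (0\<^sub>m m 1) A')"
    hence i: "i < Suc m" and j: "j < Suc m" by (auto simp: A'_def)
    show "B $$ (i,j) = four_block_mat (mat 1 1 (\<lambda>_. a)) (0\<^sub>m 1 m) (0\<^sub>m m 1) A' $$ (i,j)"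
      using B_col0[OF i] B_col0[OF j] B_sym[OF i j] i j by (auto simp: A'_def)
  qed (use B in \<open>auto simp: A'_def\<close>)
  moreover have "A'\<^sup>T = A'" by (rule eq_matI) (auto simp: A'_def B_sym)
  moreover have "A' \<in> carrier_mat m m" by (simp add: A'_def)
  ultimately show ?thesis unfolding B_def by blast
qed

definition one_diag_block :: "real mat \<Rightarrow> real mat" where
  "one_diag_block Q = four_block_mat (1\<^sub>m 1) (0\<^sub>m 1 (dim_col Q)) (0\<^sub>m (dim_row Q) 1) Q"

lemma one_diag_block_carrier:
  "Q \<in> carrier_mat m m \<Longrightarrow> one_diag_block Q \<in> carrier_mat (Suc m) (Suc m)"
  unfolding one_diag_block_def by auto

lemma one_diag_block_congruence:
  assumes Q: "Q \<in> carrier_mat m m" and M: "M \<in> carrier_mat m m"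
  shows "(one_diag_block Q)\<^sup>T * four_block_mat (mat 1 1 (\<lambda>_. a)) (0\<^sub>m 1 m) (0\<^sub>m m 1) M * one_diag_block Q
    = four_block_mat (mat 1 1 (\<lambda>_. a)) (0\<^sub>m 1 m) (0\<^sub>m m 1) (Q\<^sup>T * M * Q)"
proof -
  have "(one_diag_block Q)\<^sup>T = four_block_mat (1\<^sub>m 1) (0\<^sub>m 1 m) (0\<^sub>m m 1) Q\<^sup>T"
    unfolding one_diag_block_def using Q by (subst transpose_four_block_mat[of _ 1 1 _ m _ m]) auto
  thus ?thesis unfolding one_diag_block_def using Q M
    by (simp add: mult_four_block_mat[of _ 1 1 _ m _ m _ _ 1 _ m])
qed

lemma orthonormal_one_diag_block:
  assumes Q: "orthonormal_mat m Q"
  shows "orthonormal_mat (Suc m) (one_diag_block Q)"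
proof -
  have Qc: "Q \<in> carrier_mat m m" and QtQ: "Q\<^sup>T * Q = 1\<^sub>m m" using Q unfolding orthonormal_mat_def by auto
  have one: "four_block_mat (mat 1 1 (\<lambda>_. 1)) (0\<^sub>m 1 m) (0\<^sub>m m 1) (1\<^sub>m m) = (1\<^sub>m (Suc m) :: real mat)"
    by (rule eq_matI) auto
  have Qb: "one_diag_block Q \<in> carrier_mat (Suc m) (Suc m)" using one_diag_block_carrier[OF Qc] .
  from one_diag_block_congruence[OF Qc one_carrier_mat, of 1]
  have "(one_diag_block Q)\<^sup>T * 1\<^sub>m (Suc m) * one_diag_block Q = 1\<^sub>m (Suc m)"
    using Qc QtQ one by simp
  thus ?thesis using Qb unfolding orthonormal_mat_def by simp
qed

lemma diagonal_congruence_extend: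
  assumes W: "orthonormal_mat (Suc m) W" and Q: "orthonormal_mat m Q"
    and M: "M \<in> carrier_mat (Suc m) (Suc m)" and M': "M' \<in> carrier_mat m m"
    and block: "W\<^sup>T * M * W = four_block_mat (mat 1 1 (\<lambda>_. a)) (0\<^sub>m 1 m) (0\<^sub>m m 1) M'"
    and diag: "diagonal_mat (Q\<^sup>T * M' * Q)"
  shows "diagonal_mat ((W * one_diag_block Q)\<^sup>T * M * (W * one_diag_block Q))"
proof -
  have Wc: "W \<in> carrier_mat (Suc m) (Suc m)" and Qc: "Q \<in> carrier_mat m m"
    using W Q unfolding orthonormal_mat_def by auto
  have "(W * one_diag_block Q)\<^sup>T * M * (W * one_diag_block Q)
      = four_block_mat (mat 1 1 (\<lambda>_. a)) (0\<^sub>m 1 m) (0\<^sub>m m 1) (Q\<^sup>T * M' * Q)"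
    unfolding congruence_mult[OF Wc one_diag_block_carrier[OF Qc] M] block
    by (rule one_diag_block_congruence[OF Qc M'])
  thus ?thesis using diagonal_mat_four_block_scalar[OF _ diag] Qc M' by simp
qed

theorem symmetric_mat_orthonormal_diagonalization:
  fixes A :: "real mat"
  assumes "A \<in> carrier_mat n n" and "A\<^sup>T = A"
  shows "\<exists>P. orthonormal_mat n P \<and> diagonal_mat (P\<^sup>T * A * P)"
  using assms
proof (induction n arbitrary: A)
  case 0
  thus ?case by (intro exI[of _ "1\<^sub>m 0"]) (auto simp: orthonormal_mat_def diagonal_mat_def)
next
  case (Suc m)
  obtain v a where "eigenvector A v a"
    using symmetric_real_mat_has_eigenvector[OF Suc.prems] by auto
  hence v: "v \<in> carrier_vec (Suc m)" "v \<noteq> 0\<^sub>v (Suc m)" and Av: "A *\<^sub>v v = a \<cdot>\<^sub>v v"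
    using Suc.prems(1) unfolding eigenvector_def by auto
  obtain W k where W: "orthonormal_mat (Suc m) W" and W0: "col W 0 = k \<cdot>\<^sub>v v"
    using orthonormal_completion[OF v] by auto
  have "A *\<^sub>v col W 0 = a \<cdot>\<^sub>v col W 0"
    unfolding W0 using Suc.prems(1) v Av by (simp add: mult_mat_vec smult_smult_assoc mult.commute)
  then obtain A' where A': "A' \<in> carrier_mat m m" "A'\<^sup>T = A'"
    and block: "W\<^sup>T * A * W = four_block_mat (mat 1 1 (\<lambda>_. a)) (0\<^sub>m 1 m) (0\<^sub>m m 1) A'"
    using orthonormal_deflation[OF W Suc.prems] by auto
  obtain Q where Q: "orthonormal_mat m Q" "diagonal_mat (Q\<^sup>T * A' * Q)"
    using Suc.IH[OF A'] by auto
  show ?case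
    using orthonormal_mat_mult[OF W orthonormal_one_diag_block[OF Q(1)]]
      diagonal_congruence_extend[OF W Q(1) Suc.prems(1) A'(1) block Q(2)] by blast
qed

text \<open>The witness is \<open>w\<close> with its coordinates outside the \<open>D $$ (i0,i0)\<close>-eigenspace of \<open>D\<close>
  set to zero: \<open>C\<close> maps each eigenspace of the diagonal matrix \<open>D\<close> into itself.\<close>

lemma diagonal_commuting_common_eigenvector:
  fixes D C :: "'a :: idom mat"
  assumes D: "D \<in> carrier_mat n n" "diagonal_mat D" and C: "C \<in> carrier_mat n n"
    and DC: "D * C = C * D" and w: "w \<in> carrier_vec n" "C *\<^sub>v w = c \<cdot>\<^sub>v w"
    and i0: "i0 < n" "w $ i0 \<noteq> 0"
  shows "\<exists>u. u \<in> carrier_vec n \<and> u \<noteq> 0\<^sub>v n \<and> D *\<^sub>v u = D $$ (i0,i0) \<cdot>\<^sub>v u \<and> C *\<^sub>v u = c \<cdot>\<^sub>v u"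
proof -
  define d where "d = D $$ (i0,i0)"
  define S where "S = {j. j < n \<and> D $$ (j,j) = d}"
  define u where "u = vec n (\<lambda>j. if j \<in> S then w $ j else 0)"
  have C_block: "C $$ (i,j) = 0" if "i < n" "j < n" "D $$ (i,i) \<noteq> D $$ (j,j)" for i j
  proof -
    have "D $$ (i,i) * C $$ (i,j) = C $$ (i,j) * D $$ (j,j)"
      using arg_cong[OF DC, of "\<lambda>M. M $$ (i,j)"] that
      diagonal_mat_mult_index_left[OF D C] diagonal_mat_mult_index_right[OF D C] by simp
    thus ?thesis using that(3) by (simp add: mult.commute)
  qed
  have "u $ i0 = w $ i0" using i0 by (simp add: u_def S_def d_def)
  hence u: "u \<in> carrier_vec n" "u \<noteq> 0\<^sub>v n" using i0 by (auto simp: u_def[symmetric]) (simp add: u_def)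
  have "(C *\<^sub>v u) $ i = c * u $ i" if i: "i < n" for i
  proof -
    have "(C *\<^sub>v u) $ i = (\<Sum>j = 0..<n. C $$ (i,j) * u $ j)"
      using i C u by (simp add: scalar_prod_def)
    also have "\<dots> = (\<Sum>j = 0..<n. if i \<in> S then C $$ (i,j) * w $ j else 0)"
      using C_block i by (intro sum.cong) (auto simp: u_def S_def)
    also have "\<dots> = (if i \<in> S then c * w $ i else 0)"
      using arg_cong[OF w(2), of "\<lambda>v. v $ i"] i C w(1) by (simp add: scalar_prod_def)
    finally show ?thesis using i by (simp add: u_def)
  qed
  moreover have "(D *\<^sub>v u) $ i = d * u $ i" if i: "i < n" for i
  proof -
    have "(D *\<^sub>v u) $ i = (\<Sum>j = 0..<n. D $$ (i,j) * u $ j)"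
      using i D u by (simp add: scalar_prod_def)
    also have "\<dots> = (\<Sum>j = 0..<n. if j = i then D $$ (i,i) * u $ i else 0)"
      using i D by (intro sum.cong) (auto simp: diagonal_mat_def)
    finally show ?thesis using i by (simp add: u_def S_def)
  qed
  ultimately show ?thesis using u C D unfolding d_def by (intro exI[of _ u]) (auto intro!: eq_vecI)
qed

lemma commuting_symmetric_common_eigenvector:
  fixes A C :: "real mat"
  assumes A: "A \<in> carrier_mat n n" "A\<^sup>T = A" and C: "C \<in> carrier_mat n n" "C\<^sup>T = C"
    and AC: "A * C = C * A" and n: "n > 0"
  shows "\<exists>x a c. x \<in> carrier_vec n \<and> x \<noteq> 0\<^sub>v n \<and> A *\<^sub>v x = a \<cdot>\<^sub>v x \<and> C *\<^sub>v x = c \<cdot>\<^sub>v x"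
proof -
  obtain P where P: "orthonormal_mat n P" and diag: "diagonal_mat (P\<^sup>T * A * P)"
    using symmetric_mat_orthonormal_diagonalization[OF A] by auto
  have Pc: "P \<in> carrier_mat n n" using P unfolding orthonormal_mat_def by simp
  define D where "D = P\<^sup>T * A * P"
  define C' where "C' = P\<^sup>T * C * P"
  have D: "D \<in> carrier_mat n n" and C': "C' \<in> carrier_mat n n"
    unfolding D_def C'_def using Pc A C by auto
  have DC': "D * C' = C' * D"
    unfolding D_def C'_def orthonormal_congruence_mult[OF P A(1) C(1)]
      orthonormal_congruence_mult[OF P C(1) A(1)] AC ..
  obtain w c where "eigenvector C' w c"
    using symmetric_real_mat_has_eigenvector[OF C' _ n] congruence_symmetric[OF Pc C]
    unfolding C'_def by auto
  hence w: "w \<in> carrier_vec n" "w \<noteq> 0\<^sub>v n" "C' *\<^sub>v w = c \<cdot>\<^sub>v w"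
    using C' unfolding eigenvector_def by auto
  then obtain i0 where i0: "i0 < n" "w $ i0 \<noteq> 0" by force
  obtain u where u: "u \<in> carrier_vec n" "u \<noteq> 0\<^sub>v n"
    and Du: "D *\<^sub>v u = D $$ (i0,i0) \<cdot>\<^sub>v u" and C'u: "C' *\<^sub>v u = c \<cdot>\<^sub>v u"
    using diagonal_commuting_common_eigenvector[OF D diag[folded D_def] C' DC' w(1,3) i0] by auto
  have "P\<^sup>T *\<^sub>v (P *\<^sub>v u) = u"
    using P Pc u unfolding orthonormal_mat_def by (simp flip: assoc_mult_mat_vec)
  moreover have "P\<^sup>T *\<^sub>v 0\<^sub>v n = 0\<^sub>v n" using Pc by auto
  ultimately have "P *\<^sub>v u \<noteq> 0\<^sub>v n" using u(2) by metis
  thus ?thesis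
    using orthonormal_congruence_eigenvector[OF P A(1) u(1) Du[unfolded D_def]]
      orthonormal_congruence_eigenvector[OF P C(1) u(1) C'u[unfolded C'_def]] Pc u(1)
    by (meson mult_mat_vec_carrier)
qed

lemma four_block_scalar_commute:
  fixes A' C' :: "'a :: comm_semiring_0 mat"
  assumes A': "A' \<in> carrier_mat m m" and C': "C' \<in> carrier_mat m m"
    and comm: "four_block_mat (mat 1 1 (\<lambda>_. a)) (0\<^sub>m 1 m) (0\<^sub>m m 1) A' * four_block_mat (mat 1 1 (\<lambda>_. c)) (0\<^sub>m 1 m) (0\<^sub>m m 1) C'
      = four_block_mat (mat 1 1 (\<lambda>_. c)) (0\<^sub>m 1 m) (0\<^sub>m m 1) C' * four_block_mat (mat 1 1 (\<lambda>_. a)) (0\<^sub>m 1 m) (0\<^sub>m m 1) A'"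
  shows "A' * C' = C' * A'"
proof (rule eq_matI)
  fix i j assume "i < dim_row (C' * A')" "j < dim_col (C' * A')"
  hence ij: "i < m" "j < m" using A' C' by auto
  from arg_cong[OF comm, of "\<lambda>M. M $$ (Suc i, Suc j)"]
  show "(A' * C') $$ (i,j) = (C' * A') $$ (i,j)"
    using A' C' ij by (simp add: mult_four_block_mat[of _ 1 1 _ m _ m _ _ 1 _ m])
qed (use A' C' in auto)

theorem commuting_symmetric_orthonormal_diagonalization:
  fixes A C :: "real mat"
  assumes "A \<in> carrier_mat n n" "A\<^sup>T = A" "C \<in> carrier_mat n n" "C\<^sup>T = C" "A * C = C * A"
  shows "\<exists>P. orthonormal_mat n P \<and> diagonal_mat (P\<^sup>T * A * P) \<and> diagonal_mat (P\<^sup>T * C * P)"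
  using assms
proof (induction n arbitrary: A C)
  case 0
  thus ?case by (intro exI[of _ "1\<^sub>m 0"]) (auto simp: orthonormal_mat_def diagonal_mat_def)
next
  case (Suc m)
  note A = Suc.prems(1,2) and C = Suc.prems(3,4) and AC = Suc.prems(5)
  obtain x a c where x: "x \<in> carrier_vec (Suc m)" "x \<noteq> 0\<^sub>v (Suc m)"
    and Ax: "A *\<^sub>v x = a \<cdot>\<^sub>v x" and Cx: "C *\<^sub>v x = c \<cdot>\<^sub>v x"
    using commuting_symmetric_common_eigenvector[OF A C AC] by auto
  obtain W k where W: "orthonormal_mat (Suc m) W" and W0: "col W 0 = k \<cdot>\<^sub>v x"
    using orthonormal_completion[OF x] by auto
  have "A *\<^sub>v col W 0 = a \<cdot>\<^sub>v col W 0" "C *\<^sub>v col W 0 = c \<cdot>\<^sub>v col W 0"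
    unfolding W0 using A C x Ax Cx by (simp_all add: mult_mat_vec smult_smult_assoc mult.commute)
  then obtain A' C' where A': "A' \<in> carrier_mat m m" "A'\<^sup>T = A'"
    and A_block: "W\<^sup>T * A * W = four_block_mat (mat 1 1 (\<lambda>_. a)) (0\<^sub>m 1 m) (0\<^sub>m m 1) A'"
    and C': "C' \<in> carrier_mat m m" "C'\<^sup>T = C'"
    and C_block: "W\<^sup>T * C * W = four_block_mat (mat 1 1 (\<lambda>_. c)) (0\<^sub>m 1 m) (0\<^sub>m m 1) C'"
    using orthonormal_deflation[OF W A] orthonormal_deflation[OF W C] by metis
  have "A' * C' = C' * A'"
    using four_block_scalar_commute[OF A'(1) C'(1)] AC A_block C_block
      orthonormal_congruence_mult[OF W A(1) C(1)] orthonormal_congruence_mult[OF W C(1) A(1)] by metis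
  then obtain Q where Q: "orthonormal_mat m Q" "diagonal_mat (Q\<^sup>T * A' * Q)" "diagonal_mat (Q\<^sup>T * C' * Q)"
    using Suc.IH[OF A' C'] by auto
  show ?case
    using orthonormal_mat_mult[OF W orthonormal_one_diag_block[OF Q(1)]]
      diagonal_congruence_extend[OF W Q(1) A(1) A'(1) A_block Q(2)]
      diagonal_congruence_extend[OF W Q(1) C(1) C'(1) C_block Q(3)] by blast
qed

lemma orthonormal_diagonalization_eigenvector:
  assumes P: "orthonormal_mat n P" and M: "M \<in> carrier_mat n n"
    and diag: "diagonal_mat (P\<^sup>T * M * P)" and j: "j < n"
  shows "eigenvector M (col P j) ((P\<^sup>T * M * P) $$ (j,j))"
proof -
  have Pc: "P \<in> carrier_mat n n" and PtP: "P\<^sup>T * P = 1\<^sub>m n" using P unfolding orthonormal_mat_def by auto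
  have "col P j \<bullet> col P j = 1" using arg_cong[OF PtP, of "\<lambda>X. X $$ (j,j)"] Pc j by simp
  hence "col P j \<noteq> 0\<^sub>v n" using Pc by auto
  moreover have "col P j \<in> carrier_vec n" using col_carrier_vec[OF j Pc] .
  moreover have "M *\<^sub>v col P j = (P\<^sup>T * M * P) $$ (j,j) \<cdot>\<^sub>v col P j"
  proof -
    have "M *\<^sub>v col P j = col (M * P) j" using M Pc j by (simp add: mult_mat_vec_def)
    also have "\<dots> = col (P * (P\<^sup>T * M * P)) j" by (subst orthonormal_mat_conj[OF P M]) (rule refl)
    also have "\<dots> = (P\<^sup>T * M * P) $$ (j,j) \<cdot>\<^sub>v col P j"
      using mult_diagonal_mat_col[OF _ diag Pc j] Pc M by simp
    finally show ?thesis .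
  qed
  moreover have "dim_row M = n" using M by simp
  ultimately show ?thesis unfolding eigenvector_def by simp
qed

lemma commuting_symmetric_jointly_diagonalizable:
  assumes "A \<in> carrier_mat n n" "A\<^sup>T = A" "C \<in> carrier_mat n n" "C\<^sup>T = C" "A * C = C * A"
  shows "jointly_diagonalizable A C"
proof -
  obtain P where P: "orthonormal_mat n P" "diagonal_mat (P\<^sup>T * A * P)" "diagonal_mat (P\<^sup>T * C * P)"
    using commuting_symmetric_orthonormal_diagonalization[OF assms] by auto
  have "\<forall>j<n. (\<exists>k. eigenvector A (col P j) k) \<and> (\<exists>k. eigenvector C (col P j) k)"
    using orthonormal_diagonalization_eigenvector[OF P(1) assms(1) P(2)]
      orthonormal_diagonalization_eigenvector[OF P(1) assms(3) P(3)] by blast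
  moreover have "P \<in> carrier_mat n n" using P(1) unfolding orthonormal_mat_def by simp
  ultimately show ?thesis unfolding jointly_diagonalizable_def
    using assms(1,3) orthonormal_mat_invertible[OF P(1)] by (intro exI[of _ n]) auto
qed

lemma eigenvector_columns_diagonalize:
  fixes B P :: "'a :: comm_ring_1 mat"
  assumes B: "B \<in> carrier_mat n n" and P: "P \<in> carrier_mat n n"
    and ev: "\<forall>j<n. \<exists>k. eigenvector B (col P j) k"
  shows "\<exists>D. D \<in> carrier_mat n n \<and> diagonal_mat D \<and> B * P = P * D"
proof -
  obtain f where f: "\<And>j. j < n \<Longrightarrow> eigenvector B (col P j) (f j)" using ev by metis
  define D where "D = mat n n (\<lambda>(i,j). if i = j then f j else 0)"
  have D: "D \<in> carrier_mat n n" "diagonal_mat D" unfolding D_def diagonal_mat_def by auto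
  have "B * P = P * D"
  proof (rule eq_matI)
    fix i j assume "i < dim_row (P * D)" "j < dim_col (P * D)"
    hence ij: "i < n" "j < n" using P D by auto
    have "(B * P) $$ (i,j) = (B *\<^sub>v col P j) $ i" using B P ij by simp
    also have "\<dots> = f j * P $$ (i,j)" using f[OF ij(2)] B P ij unfolding eigenvector_def by simp
    also have "\<dots> = (P * D) $$ (i,j)"
      unfolding diagonal_mat_mult_index_right[OF D P ij] using ij by (simp add: D_def mult.commute)
    finally show "(B * P) $$ (i,j) = (P * D) $$ (i,j)" .
  qed (use B P D in auto)
  thus ?thesis using D by blast
qed

lemma jointly_diagonalizable_imp_commute:
  assumes "jointly_diagonalizable B1 B2"
  shows "B1 * B2 = B2 * B1"
proof -
  from assms obtain n P where B1: "B1 \<in> carrier_mat n n" and B2: "B2 \<in> carrier_mat n n"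
    and P: "P \<in> carrier_mat n n" and inv: "invertible_mat P"
    and ev: "\<forall>j<n. (\<exists>k. eigenvector B1 (col P j) k) \<and> (\<exists>k. eigenvector B2 (col P j) k)"
    unfolding jointly_diagonalizable_def by auto
  obtain D1 D2 where D1: "D1 \<in> carrier_mat n n" "diagonal_mat D1" "B1 * P = P * D1"
    and D2: "D2 \<in> carrier_mat n n" "diagonal_mat D2" "B2 * P = P * D2"
    using eigenvector_columns_diagonalize[OF B1 P] eigenvector_columns_diagonalize[OF B2 P] ev by metis
  obtain Pi where "inverts_mat P Pi" "inverts_mat Pi P" using inv unfolding invertible_mat_def by blast
  hence Pi: "P * Pi = 1\<^sub>m n" and "Pi * P = 1\<^sub>m (dim_row Pi)"
    using P unfolding inverts_mat_def by auto
  hence Pi_c: "Pi \<in> carrier_mat n n"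
    using P by (metis carrier_matD(2) carrier_matI index_mult_mat(2,3) index_one_mat(3))
  have swap: "X * Y * P = P * (E * F)" if "X \<in> carrier_mat n n" "Y \<in> carrier_mat n n"
    "E \<in> carrier_mat n n" "F \<in> carrier_mat n n" "X * P = P * E" "Y * P = P * F" for X Y E F
  proof -
    have "X * Y * P = X * (P * F)" using assoc_mult_mat[OF that(1,2) P] that(6) by simp
    also have "\<dots> = (P * E) * F" using assoc_mult_mat[OF that(1) P that(4)] that(5) by simp
    also have "\<dots> = P * (E * F)" using assoc_mult_mat[OF P that(3,4)] .
    finally show ?thesis .
  qed
  have comm_P: "B1 * B2 * P = B2 * B1 * P"
    using swap[OF B1 B2 D1(1) D2(1) D1(3) D2(3)] swap[OF B2 B1 D2(1) D1(1) D2(3) D1(3)]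
      diagonal_mat_mult_comm[OF D1(1,2) D2(1,2)] by simp
  have cancel: "X * P * Pi = X" if "X \<in> carrier_mat n n" for X
    using assoc_mult_mat[OF that P Pi_c] that by (simp add: Pi)
  have "B1 * B2 = B1 * B2 * P * Pi" using cancel[OF mult_carrier_mat[OF B1 B2]] by simp
  also have "\<dots> = B2 * B1" using cancel[OF mult_carrier_mat[OF B2 B1]] comm_P by simp
  finally show ?thesis .
qed

lemma symmetric_jointly_diagonalizable_iff_commute:
  assumes "B1 \<in> carrier_mat n n" "B1\<^sup>T = B1" "B2 \<in> carrier_mat n n" "B2\<^sup>T = B2"
  shows "jointly_diagonalizable B1 B2 \<longleftrightarrow> B1 * B2 = B2 * B1"
  using commuting_symmetric_jointly_diagonalizable[OF assms] jointly_diagonalizable_imp_commute by blast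

lemma transpose_submatrix: "(submatrix A I J)\<^sup>T = submatrix A\<^sup>T J I"
proof (rule eq_matI)
  fix i j assume "i < dim_row (submatrix A\<^sup>T J I)" "j < dim_col (submatrix A\<^sup>T J I)"
  hence i: "i < card {j. j < dim_col A \<and> j \<in> J}" and j: "j < card {i. i < dim_row A \<and> i \<in> I}"
    by (simp_all add: dim_submatrix)
  have "pick J i < dim_col A" "pick I j < dim_row A"
    using pick_in_set_le[OF i] pick_in_set_le[OF j] pick_reduce_set[OF i] pick_reduce_set[OF j] by auto
  thus "(submatrix A I J)\<^sup>T $$ (i,j) = submatrix A\<^sup>T J I $$ (i,j)"
    using i j by (simp add: dim_submatrix submatrix_index)
qed (simp_all add: dim_submatrix)

lemma submatrix_carrier_mat:
  "A \<in> carrier_mat n n \<Longrightarrow> submatrix A I I \<in> carrier_mat (card {i. i < n \<and> i \<in> I}) (card {i. i < n \<and> i \<in> I})"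
  by (rule carrier_matI) (auto simp: dim_submatrix)

theorem theorem2:
  fixes N :: nat and A C :: "real mat"
  assumes "adjacency_matrix N A"
    and "covariance_matrix N C"
  shows "superstationary N A C \<longleftrightarrow> supercommute N A C"
proof -
  have A: "A \<in> carrier_mat N N" "A\<^sup>T = A" using assms(1) unfolding adjacency_matrix_def by auto
  have C: "C \<in> carrier_mat N N" "C\<^sup>T = C" using assms(2) unfolding covariance_matrix_def by auto
  have "jointly_diagonalizable C A \<longleftrightarrow> A * C = C * A"
    using symmetric_jointly_diagonalizable_iff_commute[OF C A] by auto
  moreover have "jointly_diagonalizable (submatrix C I I) (submatrix A I I)
      \<longleftrightarrow> submatrix A I I * submatrix C I I = submatrix C I I * submatrix A I I" for I
    using symmetric_jointly_diagonalizable_iff_commute[OF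
        submatrix_carrier_mat[OF C(1)] transpose_submatrix[of C I I, unfolded C(2)]
        submatrix_carrier_mat[OF A(1)] transpose_submatrix[of A I I, unfolded A(2)]] by auto
  ultimately show ?thesis unfolding superstationary_def supercommute_def GWSS_def by simp
qed

end
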